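(* Let $X$ be a Tychonoff space. The socle of $T''(X)$ consists exactly of those $f\in T''(X)$ for which $\{x\in X: f(x)\neq 0\}$ is finite.
   Context: $C(X)$ is the ring of real-valued continuous functions on $X$; a cozero set is a set $\{x: h(x)\neq 0\}$ with $h\in C(X)$. $T''(X)$ is the ring (under pointwise operations) of all functions $f\colon X\to\mathbb{R}$ for which there is a dense cozero set $U$ of $X$ with $f|_U$ continuous. The socle of a ring is the sum of its minimal ideals. *)

theory Defs
  imports "HOL-Analysis.Analysis" "HOL-Algebra.Ideal"
begin

definition tychonoff_space :: "'a topology \<Rightarrow> bool" where
  "tychonoff_space X \<longleftrightarrow> completely_regular_space X \<and> t1_space X"

definition cozero_set :: "'a topology \<Rightarrow> 'a set \<Rightarrow> bool" where
  "cozero_set X U \<longleftrightarrow>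
     (\<exists>h. continuous_map X euclideanreal h \<and> U = {x \<in> topspace X. h x \<noteq> 0})"

definition Tpp_carrier :: "'a topology \<Rightarrow> ('a \<Rightarrow> real) set" where
  "Tpp_carrier X = {f. (\<forall>x. x \<notin> topspace X \<longrightarrow> f x = 0) \<and>
      (\<exists>U. cozero_set X U \<and> X closure_of U = topspace X \<and>
           continuous_map (subtopology X U) euclideanreal f)}"

definition Tpp :: "'a topology \<Rightarrow> ('a \<Rightarrow> real) ring" where
  "Tpp X = \<lparr> carrier = Tpp_carrier X,
             mult = (\<lambda>f g x. f x * g x),
             one = (\<lambda>x. if x \<in> topspace X then 1 else 0),
             zero = (\<lambda>x. 0),
             add = (\<lambda>f g x. f x + g x) \<rparr>"

definition minimal_ideal :: "'b set \<Rightarrow> ('b, 'c) ring_scheme \<Rightarrow> bool" where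
  "minimal_ideal I R \<longleftrightarrow> ideal I R \<and> I \<noteq> {\<zero>\<^bsub>R\<^esub>} \<and>
     (\<forall>J. ideal J R \<and> J \<subseteq> I \<longrightarrow> J = {\<zero>\<^bsub>R\<^esub>} \<or> J = I)"

text \<open>Socle: sum of all minimal ideals, i.e. the ideal generated by their union.\<close>
definition socle :: "('b, 'c) ring_scheme \<Rightarrow> 'b set" where
  "socle R = genideal R (\<Union>{I. minimal_ideal I R})"

end

theory Submission
  imports Defs
begin

text \<open>
  Let \<open>I\<close> be a minimal ideal and \<open>f \<in> I\<close>. If \<open>f\<close> did not vanish at two distinct points
  \<open>a\<close>, \<open>b\<close>, pick a continuous \<open>g\<close> with \<open>g a = 0\<close> and \<open>g b = 1\<close>; then \<open>f g\<close> is a nonzero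
  element of \<open>I\<close>, hence generates \<open>I\<close>, yet all its multiples vanish at \<open>a\<close>. So minimal ideals
  consist of functions with at most one-point support, and the socle lies in the ideal of
  finitely supported functions.

  Conversely, let \<open>f\<close> have finite support, \<open>f x \<noteq> 0\<close>, and let \<open>f\<close> be continuous on the dense
  cozero set \<open>U\<close>. Either \<open>x \<notin> U\<close>, or \<open>x\<close> is isolated in \<open>X\<close>, because the open set
  \<open>{y \<in> U. f y \<noteq> 0}\<close> minus the finite, hence closed, set of its other points is \<open>{x}\<close>. In both
  cases the indicator \<open>e\<^sub>x\<close> of \<open>{x}\<close> belongs to \<open>T''(X)\<close>, and it generates a minimal ideal
  since its multiples are the constant multiples of \<open>e\<^sub>x\<close>. Hence \<open>f = \<Sum> f(x) e\<^sub>x\<close> lies in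
  the socle.
\<close>

lemma cozero_set_openin: "cozero_set X U \<Longrightarrow> openin X U"
  unfolding cozero_set_def
  by (force intro: openin_continuous_map_preimage[where U = "- {0}", simplified])

lemma cozero_set_subset_topspace: "cozero_set X U \<Longrightarrow> U \<subseteq> topspace X"
  unfolding cozero_set_def by auto

lemma cozero_set_topspace: "cozero_set X (topspace X)"
  unfolding cozero_set_def by (rule exI[of _ "\<lambda>x. 1"]) auto

lemma cozero_set_Int:
  assumes "cozero_set X U" "cozero_set X V"
  shows "cozero_set X (U \<inter> V)"
proof -
  obtain h k where "continuous_map X euclideanreal h" "U = {x \<in> topspace X. h x \<noteq> 0}"
    and "continuous_map X euclideanreal k" "V = {x \<in> topspace X. k x \<noteq> 0}"
    using assms unfolding cozero_set_def by blast
  then show ?thesis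
    unfolding cozero_set_def
    by (intro exI[of _ "\<lambda>x. h x * k x"]) (auto intro: continuous_map_real_mult)
qed

lemma dense_openin_Int:
  assumes "openin X U" "X closure_of U = topspace X" "X closure_of V = topspace X"
  shows "X closure_of (U \<inter> V) = topspace X"
  using assms closure_of_openin_Int_superset[of X U V] openin_subset[of X U] by auto

lemma Tpp_carrier_iff:
  "f \<in> carrier (Tpp X) \<longleftrightarrow> (\<forall>x. x \<notin> topspace X \<longrightarrow> f x = 0) \<and>
      (\<exists>U. cozero_set X U \<and> X closure_of U = topspace X \<and>
           continuous_map (subtopology X U) euclideanreal f)"
  by (simp add: Tpp_def Tpp_carrier_def)

lemma Tpp_simps [simp]:
  "f \<otimes>\<^bsub>Tpp X\<^esub> g = (\<lambda>x. f x * g x)"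
  "f \<oplus>\<^bsub>Tpp X\<^esub> g = (\<lambda>x. f x + g x)"
  "\<one>\<^bsub>Tpp X\<^esub> = (\<lambda>x. if x \<in> topspace X then 1 else 0)"
  "\<zero>\<^bsub>Tpp X\<^esub> = (\<lambda>x. 0)"
  by (simp_all add: Tpp_def)

lemma Tpp_vanishes_outside: "f \<in> carrier (Tpp X) \<Longrightarrow> x \<notin> topspace X \<Longrightarrow> f x = 0"
  by (simp add: Tpp_carrier_iff)

lemma Tpp_pointwise_closed:
  fixes f g :: "'a \<Rightarrow> real" and op :: "real \<Rightarrow> real \<Rightarrow> real"
  assumes f: "f \<in> carrier (Tpp X)" and g: "g \<in> carrier (Tpp X)"
    and op_zero: "op 0 0 = 0"
    and op_continuous: "\<And>Y (p :: 'a \<Rightarrow> real) q.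
      continuous_map Y euclideanreal p \<Longrightarrow> continuous_map Y euclideanreal q \<Longrightarrow>
      continuous_map Y euclideanreal (\<lambda>x. op (p x) (q x))"
  shows "(\<lambda>x. op (f x) (g x)) \<in> carrier (Tpp X)"
proof -
  obtain U where U: "cozero_set X U" "X closure_of U = topspace X"
    "continuous_map (subtopology X U) euclideanreal f"
    using f by (auto simp: Tpp_carrier_iff)
  obtain V where V: "cozero_set X V" "X closure_of V = topspace X"
    "continuous_map (subtopology X V) euclideanreal g"
    using g by (auto simp: Tpp_carrier_iff)
  have "continuous_map (subtopology X (U \<inter> V)) euclideanreal (\<lambda>x. op (f x) (g x))"
    by (intro op_continuous continuous_map_from_subtopology_mono[OF U(3)]
        continuous_map_from_subtopology_mono[OF V(3)]) auto
  moreover have "X closure_of (U \<inter> V) = topspace X"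
    using U V by (intro dense_openin_Int cozero_set_openin)
  ultimately show ?thesis
    unfolding Tpp_carrier_iff
    using f g op_zero cozero_set_Int[OF U(1) V(1)] by (auto simp: Tpp_vanishes_outside)
qed

lemma Tpp_add_closed:
  "f \<in> carrier (Tpp X) \<Longrightarrow> g \<in> carrier (Tpp X) \<Longrightarrow> (\<lambda>x. f x + g x) \<in> carrier (Tpp X)"
  using Tpp_pointwise_closed[of f X g "(+)"] continuous_map_add by auto

lemma Tpp_mult_closed:
  "f \<in> carrier (Tpp X) \<Longrightarrow> g \<in> carrier (Tpp X) \<Longrightarrow> (\<lambda>x. f x * g x) \<in> carrier (Tpp X)"
  using Tpp_pointwise_closed[of f X g "(*)"] continuous_map_real_mult by auto

lemma Tpp_uminus_closed: "f \<in> carrier (Tpp X) \<Longrightarrow> (\<lambda>x. - f x) \<in> carrier (Tpp X)"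
  using Tpp_pointwise_closed[of f X f "\<lambda>a b. - a"] continuous_map_minus by auto

lemma Tpp_continuous_closed:
  assumes "continuous_map X euclideanreal f" "\<And>x. x \<notin> topspace X \<Longrightarrow> f x = 0"
  shows "f \<in> carrier (Tpp X)"
  unfolding Tpp_carrier_iff
  using assms cozero_set_topspace[of X] by (metis closure_of_topspace subtopology_topspace)

lemma Tpp_restrict_closed:
  assumes "continuous_map X euclideanreal g"
  shows "(\<lambda>x. if x \<in> topspace X then g x else 0) \<in> carrier (Tpp X)"
  by (rule Tpp_continuous_closed) (auto intro: continuous_map_eq[OF assms])

lemma Tpp_const_closed: "(\<lambda>x. if x \<in> topspace X then c else 0) \<in> carrier (Tpp X)"
  by (rule Tpp_restrict_closed) simp

lemma Tpp_cring: "cring (Tpp X)"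
proof (rule cringI)
  show "abelian_group (Tpp X)"
  proof (rule abelian_groupI)
    fix f assume "f \<in> carrier (Tpp X)"
    then show "\<exists>g\<in>carrier (Tpp X). g \<oplus>\<^bsub>Tpp X\<^esub> f = \<zero>\<^bsub>Tpp X\<^esub>"
      by (intro bexI[of _ "\<lambda>x. - f x"] Tpp_uminus_closed) auto
  qed (auto intro: Tpp_continuous_closed Tpp_add_closed)
  show "comm_monoid (Tpp X)"
    by (rule comm_monoidI)
      (auto simp: Tpp_vanishes_outside intro: Tpp_const_closed Tpp_mult_closed)
qed (auto simp: distrib_right)

lemma Tpp_a_inv:
  assumes "f \<in> carrier (Tpp X)"
  shows "\<ominus>\<^bsub>Tpp X\<^esub> f = (\<lambda>x. - f x)"
proof -
  interpret cring "Tpp X" by (rule Tpp_cring)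
  show ?thesis
    by (rule minus_equality) (auto simp: assms intro: Tpp_uminus_closed)
qed

lemma Tpp_finite_support_ideal:
  "ideal {f \<in> carrier (Tpp X). finite (support_on (topspace X) f)} (Tpp X)"
proof -
  interpret cring "Tpp X" by (rule Tpp_cring)
  let ?I = "{f \<in> carrier (Tpp X). finite (support_on (topspace X) f)}"
  have support_add: "support_on S (\<lambda>x. f x + g x) \<subseteq> support_on S f \<union> support_on S g"
    and support_mult: "support_on S (\<lambda>x. h x * f x) \<subseteq> support_on S f"
      "support_on S (\<lambda>x. f x * h x) \<subseteq> support_on S f"
    for S and f g h :: "'a \<Rightarrow> real"
    by (auto simp: support_on_def)
  show ?thesis
  proof (rule idealI[OF ring_axioms])
    show "subgroup ?I (add_monoid (Tpp X))"
    proof (rule subgroup.intro)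
      fix f g assume "f \<in> ?I" "g \<in> ?I"
      then show "f \<otimes>\<^bsub>add_monoid (Tpp X)\<^esub> g \<in> ?I"
        by (auto intro: Tpp_add_closed finite_subset[OF support_add])
    next
      fix f assume "f \<in> ?I"
      moreover have "inv\<^bsub>add_monoid (Tpp X)\<^esub> f = (\<lambda>x. - f x)"
        using \<open>f \<in> ?I\<close> Tpp_a_inv[of f X] by (simp add: a_inv_def)
      ultimately show "inv\<^bsub>add_monoid (Tpp X)\<^esub> f \<in> ?I"
        by (simp add: Tpp_uminus_closed support_on_def)
    qed (auto intro: Tpp_continuous_closed simp: support_on_def)
  qed (auto intro: Tpp_mult_closed finite_subset[OF support_mult(1)]
      finite_subset[OF support_mult(2)])
qed

lemma (in ring) socle_ideal: "ideal (socle R) R"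
  unfolding socle_def
  by (rule genideal_ideal) (auto simp: minimal_ideal_def dest: ideal.Icarr)

lemma (in ring) minimal_ideal_subset_socle: "minimal_ideal I R \<Longrightarrow> I \<subseteq> socle R"
  unfolding socle_def
  by (rule subset_trans[OF _ genideal_self]) (auto simp: minimal_ideal_def dest: ideal.Icarr)

lemma (in ring) socle_subset_ideal:
  assumes "ideal J R" and "\<And>I. minimal_ideal I R \<Longrightarrow> I \<subseteq> J"
  shows "socle R \<subseteq> J"
  unfolding socle_def using assms by (intro genideal_minimal) auto

lemma (in cring) minimal_ideal_eq_cgenideal:
  assumes I: "minimal_ideal I R" and "a \<in> I" "a \<noteq> \<zero>"
  shows "PIdl a = I"
proof -
  have "ideal I R" using I by (simp add: minimal_ideal_def)
  then have "a \<in> carrier R" "PIdl a \<subseteq> I"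
    using \<open>a \<in> I\<close> by (simp_all add: ideal.Icarr cgenideal_minimal)
  moreover have "PIdl a \<noteq> {\<zero>}"
    using cgenideal_self[OF \<open>a \<in> carrier R\<close>] \<open>a \<noteq> \<zero>\<close> by blast
  ultimately show ?thesis
    using I cgenideal_ideal unfolding minimal_ideal_def by blast
qed

lemma Tpp_separates_points:
  assumes "tychonoff_space X" "a \<in> topspace X" "b \<in> topspace X" "a \<noteq> b"
  obtains g where "g \<in> carrier (Tpp X)" "g a = 0" "g b = 1"
proof -
  have "completely_regular_space X" "t1_space X"
    using assms(1) by (simp_all add: tychonoff_space_def)
  moreover have "closedin X {b}"
    using \<open>t1_space X\<close> assms(3) by (rule closedin_t1_singleton)
  ultimately obtain g where g: "continuous_map X euclideanreal g" "g a = 0" "g ` {b} \<subseteq> {1}"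
    using assms(2,4) unfolding completely_regular_space_alt by blast
  from that[OF Tpp_restrict_closed[OF g(1)]] show thesis
    using g assms(2,3) by simp
qed

lemma minimal_ideal_Tpp_support_subsingleton:
  assumes X: "tychonoff_space X" and I: "minimal_ideal I (Tpp X)" and "f \<in> I"
    and a: "a \<in> support_on (topspace X) f" and b: "b \<in> support_on (topspace X) f"
  shows "a = b"
proof (rule ccontr)
  interpret cring "Tpp X" by (rule Tpp_cring)
  assume "a \<noteq> b"
  then obtain g where g: "g \<in> carrier (Tpp X)" "g a = 0" "g b = 1"
    using Tpp_separates_points[OF X] a b by (metis in_support_on)
  have "ideal I (Tpp X)" using I by (simp add: minimal_ideal_def)
  then have fg: "f \<otimes>\<^bsub>Tpp X\<^esub> g \<in> I"
    using \<open>f \<in> I\<close> g(1) by (rule ideal.I_r_closed)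
  have "f \<otimes>\<^bsub>Tpp X\<^esub> g \<noteq> \<zero>\<^bsub>Tpp X\<^esub>"
    using b g(3) by (auto simp: in_support_on dest: fun_cong[of _ _ b])
  then have "f \<in> PIdl\<^bsub>Tpp X\<^esub> (f \<otimes>\<^bsub>Tpp X\<^esub> g)"
    using minimal_ideal_eq_cgenideal[OF I fg] \<open>f \<in> I\<close> by simp
  then obtain h where h: "f = h \<otimes>\<^bsub>Tpp X\<^esub> (f \<otimes>\<^bsub>Tpp X\<^esub> g)"
    unfolding cgenideal_def by blast
  have "f a = 0"
    using fun_cong[OF h, of a] g(2) by simp
  then show False
    using a by (simp add: in_support_on)
qed

lemma minimal_ideal_Tpp_subset_finite_support:
  assumes "tychonoff_space X" "minimal_ideal I (Tpp X)"
  shows "I \<subseteq> {f \<in> carrier (Tpp X). finite (support_on (topspace X) f)}"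
proof
  fix f assume "f \<in> I"
  have "support_on (topspace X) f \<subseteq> {a}" if "a \<in> support_on (topspace X) f" for a
    using minimal_ideal_Tpp_support_subsingleton[OF assms \<open>f \<in> I\<close> that] by blast
  then have "finite (support_on (topspace X) f)"
    by (metis finite.emptyI finite_subset subsetI finite_insert)
  moreover have "f \<in> carrier (Tpp X)"
    using assms(2) \<open>f \<in> I\<close> by (auto simp: minimal_ideal_def dest: ideal.Icarr)
  ultimately show "f \<in> {f \<in> carrier (Tpp X). finite (support_on (topspace X) f)}"
    by simp
qed

lemma t1_space_isolated_point_of_finite_support:
  fixes f :: "'a \<Rightarrow> real"
  assumes "t1_space X" "openin X U" "continuous_map (subtopology X U) euclideanreal f"
    and "finite (support_on U f)" "x \<in> support_on U f"
  shows "openin X {x}"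
proof -
  have "openin (subtopology X U) {y \<in> topspace (subtopology X U). f y \<in> - {0}}"
    using assms(3) by (rule openin_continuous_map_preimage) auto
  then have "openin X (support_on U f)"
    using assms(2) openin_subset[OF assms(2)]
    by (auto simp: support_on_def Int_absorb1 openin_trans_full)
  moreover have "closedin X (support_on U f - {x})"
    using assms openin_subset[OF assms(2)]
    by (auto simp: t1_space_closedin_finite support_on_def)
  ultimately have "openin X (support_on U f - (support_on U f - {x}))"
    by blast
  then show ?thesis
    using assms(5) by (simp add: Diff_Diff_Int)
qed

lemma Tpp_indicator_closed:
  assumes "t1_space X" and f: "f \<in> carrier (Tpp X)" "finite (support_on (topspace X) f)"
    and x: "f x \<noteq> 0"
  shows "indicator {x} \<in> carrier (Tpp X)"
proof -
  obtain U where U: "cozero_set X U" "X closure_of U = topspace X"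
    "continuous_map (subtopology X U) euclideanreal f"
    using f by (auto simp: Tpp_carrier_iff)
  have "x \<in> topspace X"
    using f x by (metis Tpp_vanishes_outside)
  show ?thesis
  proof (cases "x \<in> U")
    case False
    have "continuous_map (subtopology X U) euclideanreal (indicator {x})"
      by (rule continuous_map_eq[of _ _ "\<lambda>y. 0"]) (use False in \<open>auto simp: indicator_def\<close>)
    then show ?thesis
      unfolding Tpp_carrier_iff using U \<open>x \<in> topspace X\<close> by (auto simp: indicator_def)
  next
    case True
    have "support_on U f \<subseteq> support_on (topspace X) f"
      using cozero_set_subset_topspace[OF U(1)] by (auto simp: support_on_def)
    then have "finite (support_on U f)"
      using f(2) by (rule finite_subset)
    then have "openin X {x}"
      using assms(1) U True x
      by (intro t1_space_isolated_point_of_finite_support) (auto simp: cozero_set_openin in_support_on)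
    moreover have "closedin X {x}"
      using assms(1) \<open>x \<in> topspace X\<close> by (simp add: closedin_t1_singleton)
    ultimately have "X frontier_of {x} = {}"
      by (simp add: frontier_of_eq_empty \<open>x \<in> topspace X\<close>)
    then have "continuous_map X euclideanreal (\<lambda>y. if y = x then 1 else 0)"
      by (intro continuous_map_cases) auto
    moreover have "indicator {x} = (\<lambda>y. if y = x then 1 else 0 :: real)"
      by (simp add: fun_eq_iff)
    ultimately show ?thesis
      using \<open>x \<in> topspace X\<close> by (auto intro: Tpp_continuous_closed)
  qed
qed

lemma Tpp_minimal_ideal_indicator:
  assumes e: "indicator {x} \<in> carrier (Tpp X)" and x: "x \<in> topspace X"
  shows "minimal_ideal (PIdl\<^bsub>Tpp X\<^esub> indicator {x}) (Tpp X)"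
  unfolding minimal_ideal_def
proof (intro conjI allI impI)
  interpret cring "Tpp X" by (rule Tpp_cring)
  let ?e = "indicator {x} :: 'a \<Rightarrow> real"
  show "ideal (PIdl\<^bsub>Tpp X\<^esub> ?e) (Tpp X)"
    by (rule cgenideal_ideal[OF e])
  show "PIdl\<^bsub>Tpp X\<^esub> ?e \<noteq> {\<zero>\<^bsub>Tpp X\<^esub>}"
  proof
    assume "PIdl\<^bsub>Tpp X\<^esub> ?e = {\<zero>\<^bsub>Tpp X\<^esub>}"
    then have "?e x = 0"
      using cgenideal_self[OF e] by simp
    then show False by simp
  qed
  fix J assume J: "ideal J (Tpp X) \<and> J \<subseteq> PIdl\<^bsub>Tpp X\<^esub> ?e"
  show "J = {\<zero>\<^bsub>Tpp X\<^esub>} \<or> J = PIdl\<^bsub>Tpp X\<^esub> ?e"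
  proof (cases "J = {\<zero>\<^bsub>Tpp X\<^esub>}")
    case False
    then obtain j where "j \<in> J" "j \<noteq> \<zero>\<^bsub>Tpp X\<^esub>"
      using J additive_subgroup.zero_closed[OF ideal.axioms(1)] by blast
    moreover obtain h where "j = h \<otimes>\<^bsub>Tpp X\<^esub> ?e"
      using \<open>j \<in> J\<close> J unfolding cgenideal_def by blast
    ultimately have j: "j = (\<lambda>y. h x * ?e y)" "h x \<noteq> 0"
      by (auto simp: fun_eq_iff indicator_def)
    let ?c = "\<lambda>y. if y \<in> topspace X then 1 / h x else 0"
    have "?c \<otimes>\<^bsub>Tpp X\<^esub> j \<in> J"
      using J \<open>j \<in> J\<close> Tpp_const_closed by (blast intro: ideal.I_l_closed)
    moreover have "?c \<otimes>\<^bsub>Tpp X\<^esub> j = ?e"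
      using j x by (auto simp: fun_eq_iff indicator_def)
    ultimately have "?e \<in> J" by simp
    then show ?thesis
      using J cgenideal_minimal by blast
  qed simp
qed

lemma Tpp_finite_support_in_socle:
  assumes X: "t1_space X"
  shows "f \<in> carrier (Tpp X) \<Longrightarrow> finite (support_on (topspace X) f) \<Longrightarrow> f \<in> socle (Tpp X)"
proof (induction "card (support_on (topspace X) f)" arbitrary: f)
  case 0
  interpret cring "Tpp X" by (rule Tpp_cring)
  have "f y = 0" for y
    using 0 Tpp_vanishes_outside[of f X y] by (cases "y \<in> topspace X") (auto simp: in_support_on)
  then have "f = \<zero>\<^bsub>Tpp X\<^esub>"
    by (simp add: fun_eq_iff)
  then show ?case
    using additive_subgroup.zero_closed[OF ideal.axioms(1)[OF socle_ideal]] by simp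
next
  case (Suc n f)
  interpret cring "Tpp X" by (rule Tpp_cring)
  obtain x where x: "x \<in> support_on (topspace X) f"
    using Suc.hyps(2) by (metis card.empty ex_in_conv nat.distinct(1))
  let ?e = "indicator {x} :: 'a \<Rightarrow> real"
  have e: "?e \<in> carrier (Tpp X)"
    using Tpp_indicator_closed[OF X Suc.prems] x by (simp add: in_support_on)
  let ?g = "\<lambda>y. f y - f y * ?e y"
  have "?g \<in> carrier (Tpp X)"
    by (rule Tpp_pointwise_closed[OF Suc.prems(1) e, of "\<lambda>a b. a - a * b"])
      (auto intro: continuous_map_diff continuous_map_real_mult)
  moreover have "support_on (topspace X) ?g = support_on (topspace X) f - {x}"
    by (auto simp: support_on_def indicator_def)
  ultimately have "?g \<in> socle (Tpp X)"
    using Suc x by (intro Suc.hyps(1)) auto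
  moreover have "f \<otimes>\<^bsub>Tpp X\<^esub> ?e \<in> socle (Tpp X)"
    using Tpp_minimal_ideal_indicator[OF e] minimal_ideal_subset_socle x Suc.prems(1)
    unfolding cgenideal_def by (fastforce simp: in_support_on m_comm[OF _ e])
  ultimately have "?g \<oplus>\<^bsub>Tpp X\<^esub> (f \<otimes>\<^bsub>Tpp X\<^esub> ?e) \<in> socle (Tpp X)"
    by (rule additive_subgroup.a_closed[OF ideal.axioms(1)[OF socle_ideal]])
  then show ?case
    by simp
qed

theorem theorem5p2:
  fixes X :: "'a topology"
  assumes "tychonoff_space X"
  shows "socle (Tpp X) = {f \<in> carrier (Tpp X). finite {x \<in> topspace X. f x \<noteq> 0}}"
proof -
  interpret cring "Tpp X" by (rule Tpp_cring)
  have "socle (Tpp X) \<subseteq> {f \<in> carrier (Tpp X). finite (support_on (topspace X) f)}"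
    by (intro socle_subset_ideal Tpp_finite_support_ideal
        minimal_ideal_Tpp_subset_finite_support[OF assms])
  moreover have "{f \<in> carrier (Tpp X). finite (support_on (topspace X) f)} \<subseteq> socle (Tpp X)"
    using Tpp_finite_support_in_socle assms by (auto simp: tychonoff_space_def)
  ultimately show ?thesis
    by (simp add: support_on_def)
qed

end
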